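(* Suppose $0<a<b$, $c>1$ and $0<\alpha<\alpha_c$. For all real $k\ne0$, with $\xi=k+i\alpha$: (1) $k\,\operatorname{Im}\hat S(\xi)<0$; (2) $\sqrt{a/b}<|\hat S(\xi)|<\hat S(i\alpha)=\sqrt{\frac{1-a\alpha^2}{1-b\alpha^2}}<c$; (3) $|\hat S(\xi)|<1-\frac12\frac{(b-a)(k^2-\alpha^2)}{1+b(k^2-\alpha^2)}$; (4) $i\xi\hat S(\xi)=-\sqrt{-\xi^2\frac{1+a\xi^2}{1+b\xi^2}}$ (principal square root).
   Context: $\alpha_c=\sqrt{(c^2-1)/(bc^2-a)}$. $\hat S(\xi)=\sqrt{\frac{1+a\xi^2}{1+b\xi^2}}$ is the principal-branch square root, which is analytic on the strip $0\le\operatorname{Im}\xi\le\alpha$ when $\alpha<b^{-1/2}$ (there the ratio $\frac{1+a\xi^2}{1+b\xi^2}=\frac ab+(1-\frac ab)\frac1{1+b\xi^2}$ has positive real part). *)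

theory Defs
  imports Complex_Main
begin

definition Shat :: "real \<Rightarrow> real \<Rightarrow> complex \<Rightarrow> complex" where
  "Shat a b \<xi> = csqrt ((1 + of_real a * \<xi>\<^sup>2) / (1 + of_real b * \<xi>\<^sup>2))"

definition alpha_c :: "real \<Rightarrow> real \<Rightarrow> real \<Rightarrow> real" where
  "alpha_c a b c = sqrt ((c\<^sup>2 - 1) / (b * c\<^sup>2 - a))"

end

theory Submission
  imports Defs
begin

(* Write xi = k + i alpha with k ~= 0 and 0 < alpha, and R = (1 + a xi^2)/(1 + b xi^2),
   so that Shat a b xi = csqrt R.  The whole argument rests on the decomposition
     R = a/b + (1 - a/b) / w,   w = 1 + b xi^2,
   where Re w = 1 + b (k^2 - alpha^2) > 1 - b alpha^2 > 0 and Im w = 2 b k alpha ~= 0.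
   Hence Re R > a/b, |R| < a/b + (1 - a/b)/Re w <= (1 - a alpha^2)/(1 - b alpha^2),
   and Im R has the sign of -k.  The statements about Shat then follow from general
   properties of the principal square root: |csqrt z| = sqrt |z|, Im (csqrt z) has
   the sign of Im z, and csqrt (omega^2 z) = omega csqrt z as soon as omega csqrt z
   lies in the open right half plane; the last fact, with omega = -i xi, gives (4). *)

text \<open>The hypothesis \<open>\<alpha> < \<alpha>\<^sub>c\<close> means exactly that \<open>b\<alpha>\<^sup>2 < 1\<close> (so the strip avoids the
  branch points of the symbol) and that the value of the symbol at \<open>i\<alpha>\<close> stays below \<open>c\<close>.\<close>

lemma alpha_c_strip:
  fixes a b c \<alpha> :: real
  assumes "0 < a" "a < b" "1 < c" "0 < \<alpha>" "\<alpha> < alpha_c a b c"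
  shows "b * \<alpha>\<^sup>2 < 1" and "(1 - a * \<alpha>\<^sup>2) / (1 - b * \<alpha>\<^sup>2) < c\<^sup>2"
proof -
  have c2: "1 < c\<^sup>2" using assms(3) by (simp add: one_less_power)
  have den: "0 < b * c\<^sup>2 - a"
    using assms(1,2) c2 by (smt (verit) mult_less_cancel_left1)
  have "\<alpha>\<^sup>2 < (c\<^sup>2 - 1) / (b * c\<^sup>2 - a)"
    using assms(4,5) unfolding alpha_c_def by (metis real_sqrt_abs abs_of_pos real_sqrt_less_iff)
  then have key: "1 - a * \<alpha>\<^sup>2 < c\<^sup>2 * (1 - b * \<alpha>\<^sup>2)"
    using den by (simp add: pos_less_divide_eq algebra_simps)
  show bt: "b * \<alpha>\<^sup>2 < 1"
  proof (rule ccontr)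
    assume "\<not> b * \<alpha>\<^sup>2 < 1"
    then have "c\<^sup>2 * (1 - b * \<alpha>\<^sup>2) \<le> 1 - b * \<alpha>\<^sup>2"
      using mult_nonneg_nonpos[of "c\<^sup>2 - 1" "1 - b * \<alpha>\<^sup>2"] c2 by (simp add: algebra_simps)
    moreover have "a * \<alpha>\<^sup>2 \<le> b * \<alpha>\<^sup>2" using assms(2) by (simp add: mult_right_mono)
    ultimately show False using key by linarith
  qed
  show "(1 - a * \<alpha>\<^sup>2) / (1 - b * \<alpha>\<^sup>2) < c\<^sup>2"
    using key bt by (simp add: divide_less_eq mult.commute)
qed

text \<open>The imaginary part of the principal root has the sign of the imaginary part of
  the radicand (as \<open>Im z = 2 Re (csqrt z) Im (csqrt z)\<close> and \<open>Re (csqrt z) \<ge> 0\<close>).\<close>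

lemma Im_csqrt_same_sign:
  assumes "Im z \<noteq> 0"
  shows "0 < Im z * Im (csqrt z)"
proof -
  have Im_z: "Im z = 2 * Re (csqrt z) * Im (csqrt z)"
    by (metis Im_power2 power2_csqrt)
  then have "Re (csqrt z) \<noteq> 0" and "Im (csqrt z) \<noteq> 0" using assms by auto
  then have "0 < Re (csqrt z) * (Im (csqrt z))\<^sup>2"
    using Re_csqrt[of z] by simp
  then show ?thesis unfolding Im_z by (simp add: power2_eq_square mult.assoc mult.left_commute)
qed

text \<open>For any \<open>S\<close>, the real part of \<open>\<omega> S\<close> weighted by \<open>2 Re S\<close> is expressed through \<open>\<omega>\<close>
  and \<open>S\<^sup>2\<close> alone; applied to \<open>S = csqrt z\<close> this is how \<open>Re (\<omega> csqrt z) > 0\<close> is checked.\<close>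

lemma Re_mult_root:
  fixes S \<omega> :: complex
  shows "2 * Re S * Re (\<omega> * S) = Re \<omega> * (cmod (S\<^sup>2) + Re (S\<^sup>2)) - Im \<omega> * Im (S\<^sup>2)"
proof -
  have "cmod (S\<^sup>2) = (Re S)\<^sup>2 + (Im S)\<^sup>2" by (simp add: norm_power cmod_power2)
  then show ?thesis by (simp add: power2_eq_square algebra_simps)
qed

lemma csqrt_square_mult:
  assumes "0 < Re (\<omega> * csqrt z)"
  shows "csqrt (\<omega>\<^sup>2 * z) = \<omega> * csqrt z"
  using assms by (intro csqrt_unique) (simp_all add: power_mult_distrib)

lemma ratio_decomposition:
  fixes a b z :: "'a :: field"
  assumes "b \<noteq> 0" "1 + b * z \<noteq> 0"
  shows "(1 + a * z) / (1 + b * z) = a / b + (1 - a / b) / (1 + b * z)"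
proof -
  have "1 + a * z = a / b * (1 + b * z) + (1 - a / b)"
    using assms(1) by (simp add: field_simps)
  then show ?thesis using assms(2) by (metis add_divide_distrib nonzero_mult_div_cancel_right)
qed

text \<open>Real and imaginary part of \<open>A + B / w\<close>, and the bound on its modulus that uses
  \<open>|w| > Re w\<close> for non-real \<open>w\<close>.\<close>

lemma Re_Im_plus_over:
  fixes A B :: real and w :: complex
  shows "Re (of_real A + of_real B / w) = A + B * Re w / (cmod w)\<^sup>2"
    and "Im (of_real A + of_real B / w) = - B * Im w / (cmod w)\<^sup>2"
  by (simp_all add: Re_divide Im_divide cmod_power2)

lemma norm_plus_over_less:
  fixes A B :: real and w :: complex
  assumes "0 \<le> A" "0 < B" "0 < Re w" "Im w \<noteq> 0"
  shows "cmod (of_real A + of_real B / w) < A + B / Re w"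
proof -
  have "(Re w)\<^sup>2 < (cmod w)\<^sup>2" using assms(4) by (simp add: cmod_power2)
  then have "Re w < cmod w" by (rule power2_less_imp_less) simp
  then have "B / cmod w < B / Re w"
    using assms(2,3) by (simp add: frac_less2)
  moreover have "cmod (of_real A + of_real B / w) \<le> A + B / cmod w"
    using norm_triangle_ineq[of "of_real A" "of_real B / w"] assms(1,2)
    by (simp add: norm_divide)
  ultimately show ?thesis by linarith
qed

lemma ratio_on_line:
  fixes a b k \<alpha> :: real
  assumes "0 < a" "a < b" "0 < \<alpha>" "b * \<alpha>\<^sup>2 < 1" "k \<noteq> 0"
  defines "\<xi> \<equiv> Complex k \<alpha>"
  defines "R \<equiv> (1 + of_real a * \<xi>\<^sup>2) / (1 + of_real b * \<xi>\<^sup>2)"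
  shows "a / b < Re R"
    and "cmod R < a / b + (1 - a / b) / (1 + b * (k\<^sup>2 - \<alpha>\<^sup>2))"
    and "cmod R < (1 - a * \<alpha>\<^sup>2) / (1 - b * \<alpha>\<^sup>2)"
    and "k * Im R < 0"
    and "0 < \<alpha> * (cmod R + Re R) + k * Im R"
proof -
  define w where "w = 1 + of_real b * \<xi>\<^sup>2"
  define A B where "A = a / b" and "B = 1 - a / b"
  have A: "0 < A" and B: "0 < B" using assms(1,2) by (simp_all add: A_def B_def)
  have Re_w: "Re w = 1 + b * (k\<^sup>2 - \<alpha>\<^sup>2)" and Im_w: "Im w = 2 * b * k * \<alpha>"
    unfolding w_def \<xi>_def by (simp_all add: power2_eq_square algebra_simps)
  have Re_w_ge: "1 - b * \<alpha>\<^sup>2 \<le> Re w" using assms(1,2) unfolding Re_w by (simp add: algebra_simps)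
  have Re_w_pos: "0 < Re w" using Re_w_ge assms(4) by linarith
  have Im_w_nz: "Im w \<noteq> 0" using assms(1-3,5) Im_w by simp
  have w_norm: "0 < (cmod w)\<^sup>2" using Im_w_nz by (auto simp: complex_eq_iff)
  have "w \<noteq> 0" using Re_w_pos by auto
  then have R: "R = of_real A + of_real B / w"
    unfolding R_def w_def[symmetric] unfolding w_def A_def B_def using assms(1,2)
    by (subst ratio_decomposition) (auto simp: of_real_divide)
  have Re_R: "Re R = A + B * Re w / (cmod w)\<^sup>2" and Im_R: "Im R = - B * Im w / (cmod w)\<^sup>2"
    unfolding R by (rule Re_Im_plus_over)+
  show "a / b < Re R"
    using B Re_w_pos w_norm unfolding Re_R A_def by simp
  have norm_R: "cmod R < A + B / Re w"
    unfolding R using A B Re_w_pos Im_w_nz by (intro norm_plus_over_less) auto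
  then show "cmod R < a / b + (1 - a / b) / (1 + b * (k\<^sup>2 - \<alpha>\<^sup>2))"
    unfolding A_def B_def Re_w .
  have "A + B / Re w \<le> A + B / (1 - b * \<alpha>\<^sup>2)"
    using B Re_w_ge assms(4) by (simp add: frac_le)
  also have "\<dots> = (1 - a * \<alpha>\<^sup>2) / (1 - b * \<alpha>\<^sup>2)"
    using assms(1,2,4) unfolding A_def B_def by (simp add: field_simps)
  finally show "cmod R < (1 - a * \<alpha>\<^sup>2) / (1 - b * \<alpha>\<^sup>2)" using norm_R by linarith
  define E where "E = B * b * k\<^sup>2 / (cmod w)\<^sup>2"
  have E: "0 < E" unfolding E_def using B assms(1,2,5) w_norm by simp
  have kIm_R: "k * Im R = - (\<alpha> * (2 * E))"
    unfolding Im_R Im_w E_def by (simp add: power2_eq_square algebra_simps)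
  show "k * Im R < 0"
    unfolding kIm_R using E assms(3) by simp
  have "B * b * k\<^sup>2 \<le> B * Re w"
    using B assms(4) unfolding Re_w by (simp add: algebra_simps)
  then have "E \<le> B * Re w / (cmod w)\<^sup>2"
    unfolding E_def by (rule divide_right_mono) simp
  then have "2 * E < cmod R + Re R"
    using A complex_Re_le_cmod[of R] unfolding Re_R by linarith
  then have "\<alpha> * (2 * E) < \<alpha> * (cmod R + Re R)"
    using assms(3) by simp
  then show "0 < \<alpha> * (cmod R + Re R) + k * Im R"
    unfolding kIm_R by linarith
qed

lemma Shat_imaginary_axis:
  fixes a b \<alpha> :: real
  assumes "a * \<alpha>\<^sup>2 < 1" "b * \<alpha>\<^sup>2 < 1"
  shows "Shat a b (\<i> * of_real \<alpha>) = of_real (sqrt ((1 - a * \<alpha>\<^sup>2) / (1 - b * \<alpha>\<^sup>2)))"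
proof -
  have "(1 + of_real a * (\<i> * of_real \<alpha>)\<^sup>2) / (1 + of_real b * (\<i> * of_real \<alpha>)\<^sup>2)
        = (of_real ((1 - a * \<alpha>\<^sup>2) / (1 - b * \<alpha>\<^sup>2)) :: complex)"
    by (simp add: power_mult_distrib)
  then show ?thesis
    unfolding Shat_def using assms by (simp add: csqrt_of_real)
qed

lemma half_majorant_eq:
  fixes a b u D :: real
  assumes "b \<noteq> 0" "D \<noteq> 0" "D = 1 + b * u"
  shows "(1 + (a / b + (1 - a / b) / D)) / 2 = 1 - (1/2) * ((b - a) * u) / D"
proof -
  have "(1 + (a / b + (1 - a / b) / D)) / 2 = (b * D + a * D + (b - a)) / (2 * b * D)"
    using assms(1,2) by (simp add: field_simps)
  also have "\<dots> = (2 * b * D - b * ((b - a) * u)) / (2 * b * D)"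
    unfolding assms(3) by (simp add: algebra_simps)
  also have "\<dots> = 1 - (1/2) * ((b - a) * u) / D"
    using assms(1,2) by (simp add: field_simps)
  finally show ?thesis .
qed

text \<open>Claim (3) from the bound on \<open>|R|\<close>, via the inequality \<open>\<surd>x \<le> (1 + x)/2\<close>.\<close>

lemma sqrt_below_half_majorant:
  fixes x a b u :: real
  assumes "0 \<le> x" "b \<noteq> 0" "0 < 1 + b * u" "x < a / b + (1 - a / b) / (1 + b * u)"
  shows "sqrt x < 1 - (1/2) * ((b - a) * u) / (1 + b * u)"
proof -
  have "sqrt x \<le> (1 + x) / 2" using arith_geo_mean_sqrt[of 1 x] assms(1) by simp
  also have "\<dots> < (1 + (a / b + (1 - a / b) / (1 + b * u))) / 2"
    using assms(4) by (intro divide_strict_right_mono add_strict_left_mono) auto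
  also have "\<dots> = 1 - (1/2) * ((b - a) * u) / (1 + b * u)"
    using assms(2,3) by (intro half_majorant_eq) auto
  finally show ?thesis .
qed

text \<open>Claim (4): if \<open>-i\<xi> csqrt R\<close> lies in the right half plane, it is the principal
  root of \<open>-\<xi>\<^sup>2 R\<close>; by \<open>Re_mult_root\<close> this is a sign condition on \<open>R\<close> alone.\<close>

lemma i_xi_csqrt:
  fixes k \<alpha> :: real and R :: complex
  assumes "0 < \<alpha> * (cmod R + Re R) + k * Im R"
  defines "\<xi> \<equiv> Complex k \<alpha>"
  shows "\<i> * \<xi> * csqrt R = - csqrt (- \<xi>\<^sup>2 * R)"
proof -
  define \<omega> where "\<omega> = - \<i> * \<xi>"
  define S where "S = csqrt R"
  have "2 * Re S * Re (\<omega> * S) = \<alpha> * (cmod R + Re R) + k * Im R"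
    using Re_mult_root[of S \<omega>] unfolding \<omega>_def \<xi>_def S_def power2_csqrt by simp
  then have "0 < 2 * Re S * Re (\<omega> * S)" using assms(1) by linarith
  then have "0 < Re (\<omega> * S)"
    using Re_csqrt[of R] unfolding S_def[symmetric] by (smt (verit) zero_less_mult_iff)
  then have "csqrt (\<omega>\<^sup>2 * R) = \<omega> * S" unfolding S_def by (rule csqrt_square_mult)
  moreover have "\<omega>\<^sup>2 = - \<xi>\<^sup>2" unfolding \<omega>_def by (simp add: power_mult_distrib)
  ultimately show ?thesis unfolding \<omega>_def S_def by simp
qed

theorem lemma3p1:
  fixes a b c \<alpha> k :: real
  assumes "0 < a" "a < b" "c > 1" "0 < \<alpha>" "\<alpha> < alpha_c a b c" "k \<noteq> 0"
  defines "\<xi> \<equiv> Complex k \<alpha>"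
  shows "k * Im (Shat a b \<xi>) < 0 \<and>
         sqrt (a / b) < cmod (Shat a b \<xi>) \<and>
         cmod (Shat a b \<xi>) < sqrt ((1 - a * \<alpha>\<^sup>2) / (1 - b * \<alpha>\<^sup>2)) \<and>
         Shat a b (\<i> * of_real \<alpha>) = of_real (sqrt ((1 - a * \<alpha>\<^sup>2) / (1 - b * \<alpha>\<^sup>2))) \<and>
         sqrt ((1 - a * \<alpha>\<^sup>2) / (1 - b * \<alpha>\<^sup>2)) < c \<and>
         cmod (Shat a b \<xi>) < 1 - (1/2) * ((b - a) * (k\<^sup>2 - \<alpha>\<^sup>2)) / (1 + b * (k\<^sup>2 - \<alpha>\<^sup>2)) \<and>
         \<i> * \<xi> * Shat a b \<xi> = - csqrt (- \<xi>\<^sup>2 * ((1 + of_real a * \<xi>\<^sup>2) / (1 + of_real b * \<xi>\<^sup>2)))"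
proof -
  have bt: "b * \<alpha>\<^sup>2 < 1" and Lc: "(1 - a * \<alpha>\<^sup>2) / (1 - b * \<alpha>\<^sup>2) < c\<^sup>2"
    using alpha_c_strip[OF assms(1-5)] by auto
  have "a * \<alpha>\<^sup>2 \<le> b * \<alpha>\<^sup>2" using assms(2) by (simp add: mult_right_mono)
  then have at: "a * \<alpha>\<^sup>2 < 1" using bt by linarith
  define L where "L = (1 - a * \<alpha>\<^sup>2) / (1 - b * \<alpha>\<^sup>2)"
  define R where "R = (1 + of_real a * \<xi>\<^sup>2) / (1 + of_real b * \<xi>\<^sup>2)"
  have S: "Shat a b \<xi> = csqrt R" unfolding Shat_def R_def ..
  note R_facts = ratio_on_line[OF assms(1,2,4) bt assms(6), folded \<xi>_def, folded R_def L_def]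
  have "0 < Im R * Im (csqrt R)"
    using R_facts(4) by (intro Im_csqrt_same_sign) auto
  then have Im_sign: "k * Im (csqrt R) < 0"
    using R_facts(4) by (auto simp: mult_less_0_iff zero_less_mult_iff)
  have norm_lower: "sqrt (a / b) < sqrt (cmod R)"
    using R_facts(1) complex_Re_le_cmod[of R] by simp
  have norm_upper: "sqrt (cmod R) < sqrt L" using R_facts(3) by simp
  have axis_below_c: "sqrt L < c" using Lc assms(3) unfolding L_def[symmetric] by (intro real_less_lsqrt) auto
  have "0 \<le> b * k\<^sup>2" using assms(1,2) by simp
  then have D: "0 < 1 + b * (k\<^sup>2 - \<alpha>\<^sup>2)" using bt by (simp add: right_diff_distrib)
  have norm_claim3: "sqrt (cmod R) < 1 - (1/2) * ((b - a) * (k\<^sup>2 - \<alpha>\<^sup>2)) / (1 + b * (k\<^sup>2 - \<alpha>\<^sup>2))"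
    using assms(1,2) D R_facts(2) by (intro sqrt_below_half_majorant) auto
  have phase: "\<i> * \<xi> * csqrt R = - csqrt (- \<xi>\<^sup>2 * R)"
    using R_facts(5) unfolding \<xi>_def by (rule i_xi_csqrt)
  show ?thesis
    unfolding S norm_csqrt R_def[symmetric] L_def[symmetric]
    using Im_sign norm_lower norm_upper axis_below_c norm_claim3 phase Shat_imaginary_axis[OF at bt] unfolding L_def by simp
qed

end
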